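(* Let $K$ be a field, $L$ a right $K$-vector space of dimension $\kappa>1$, and $R$ the endomorphism algebra of $L$. If $\kappa$ is finite, then $R$ has a multiplicative basis but no strong multiplicative basis. If $\kappa$ is infinite, then $R$ has no bounded basis.
   Context: Let $B$ be a $K$-linear basis of a $K$-algebra $R$. For $r\in R$ write $r=\sum_{b\in B} b k_b$, $\mathrm{supp}(r)=\{b\mid k_b\neq 0\}$, $\mathrm{cs}(r)=|\mathrm{supp}(r)|$. $B$ is $k$-bounded ($1\le k<\omega$) if $\mathrm{cs}(bb')\le k$ for all $b,b'\in B$, and bounded if $k$-bounded for some $k$. $B$ is multiplicative if for all $b,b'\in B$ either $bb'=0$ or $bb'\in B$; it is strong multiplicative if $bb'\in B$ for all $b,b'\in B$. *)

theory Defs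
  imports Complex_Main "HOL-Library.Function_Algebras"
begin

text \<open>R = End_K(L) is the set of K-linear maps L \<rightarrow> L, sitting inside the
  K-vector space of all functions L \<Rightarrow> L (pointwise operations),
  with multiplication given by composition.\<close>

definition End_alg :: "('k::field \<Rightarrow> 'v::ab_group_add \<Rightarrow> 'v) \<Rightarrow> ('v \<Rightarrow> 'v) set" where
  "End_alg scale = {f. Vector_Spaces.linear scale scale f}"

definition fscale :: "('k::field \<Rightarrow> 'v::ab_group_add \<Rightarrow> 'v) \<Rightarrow> 'k \<Rightarrow> ('v \<Rightarrow> 'v) \<Rightarrow> ('v \<Rightarrow> 'v)" where
  "fscale scale c f = (\<lambda>x. scale c (f x))"

definition is_basis_End :: "('k::field \<Rightarrow> 'v::ab_group_add \<Rightarrow> 'v) \<Rightarrow> ('v \<Rightarrow> 'v) set \<Rightarrow> bool" where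
  "is_basis_End scale B \<longleftrightarrow> B \<subseteq> End_alg scale \<and>
     \<not> module.dependent (fscale scale) B \<and> module.span (fscale scale) B = End_alg scale"

definition supp_B :: "('k::field \<Rightarrow> 'v::ab_group_add \<Rightarrow> 'v) \<Rightarrow> ('v \<Rightarrow> 'v) set \<Rightarrow> ('v \<Rightarrow> 'v) \<Rightarrow> ('v \<Rightarrow> 'v) set" where
  "supp_B scale B r = {b \<in> B. module.representation (fscale scale) B r b \<noteq> 0}"

definition cs_B :: "('k::field \<Rightarrow> 'v::ab_group_add \<Rightarrow> 'v) \<Rightarrow> ('v \<Rightarrow> 'v) set \<Rightarrow> ('v \<Rightarrow> 'v) \<Rightarrow> nat" where
  "cs_B scale B r = card (supp_B scale B r)"

definition k_bounded :: "('k::field \<Rightarrow> 'v::ab_group_add \<Rightarrow> 'v) \<Rightarrow> nat \<Rightarrow> ('v \<Rightarrow> 'v) set \<Rightarrow> bool" where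
  "k_bounded scale k B \<longleftrightarrow> (\<forall>b\<in>B. \<forall>b'\<in>B. cs_B scale B (b \<circ> b') \<le> k)"

definition bounded_basis :: "('k::field \<Rightarrow> 'v::ab_group_add \<Rightarrow> 'v) \<Rightarrow> ('v \<Rightarrow> 'v) set \<Rightarrow> bool" where
  "bounded_basis scale B \<longleftrightarrow> (\<exists>k\<ge>1. k_bounded scale k B)"

definition multiplicative :: "('v \<Rightarrow> 'v::ab_group_add) set \<Rightarrow> bool" where
  "multiplicative B \<longleftrightarrow> (\<forall>b\<in>B. \<forall>b'\<in>B. b \<circ> b' = 0 \<or> b \<circ> b' \<in> B)"

definition strong_multiplicative :: "('v \<Rightarrow> 'v) set \<Rightarrow> bool" where
  "strong_multiplicative B \<longleftrightarrow> (\<forall>b\<in>B. \<forall>b'\<in>B. b \<circ> b' \<in> B)"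

end

theory Submission
  imports Defs
begin

text \<open>For a k-bounded basis B, every product xy is a
  combination of the products bb' with b, b' in the supports of x and y, so
  cs(xy) \<le> k cs(x) cs(y). If L is infinite-dimensional, L is isomorphic to countably many copies
  of itself, which gives maps s_i such that every sequence y_i factors as y_i = r s_i through a
  single r; choosing y_i with cs(y_i) > k cs(s_i) i and then i = cs(r) violates the bound.

  If L is finite-dimensional, the matrix units e_ij form a multiplicative basis. For a strong
  multiplicative basis, the sum of all coordinates would be an additive and multiplicative functional
  on R taking the value 1 on the basis. For dim L \<ge> 2 no such functional exists: it kills e_ij,
  whose square is 0, hence e_ii = e_ij e_ji, hence 1 = \<Sum> e_ii, hence everything.\<close>

lemma sum_fun_apply: "(\<Sum>a\<in>A. f a) x = (\<Sum>a\<in>A. f a x)"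
  by (induct A rule: infinite_finite_induct) auto

lemma sum_comp: "(\<Sum>a\<in>A. f a) \<circ> h = (\<Sum>a\<in>A. f a \<circ> h)"
  by (simp add: fun_eq_iff sum_fun_apply)

lemma fscale_comp: "fscale scale c f \<circ> g = fscale scale c (f \<circ> g)"
  by (simp add: fscale_def o_def)

lemma vector_space_fscale:
  assumes "vector_space scale"
  shows "vector_space (fscale scale)"
proof -
  interpret vector_space scale by fact
  show ?thesis
    by unfold_locales (auto simp: fscale_def fun_eq_iff scale_right_distrib scale_left_distrib)
qed

locale endomorphism_algebra = V: vector_space scale
  for scale :: "'k::field \<Rightarrow> 'v::ab_group_add \<Rightarrow> 'v"
begin

sublocale F: vector_space "fscale scale"
  using vector_space_fscale V.vector_space_axioms .

sublocale P: vector_space_pair scale scale ..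

lemma End_alg_iff: "f \<in> End_alg scale \<longleftrightarrow> Vector_Spaces.linear scale scale f"
  by (simp add: End_alg_def)

lemma linear_comp_sum:
  assumes "Vector_Spaces.linear scale scale x"
  shows "x \<circ> (\<Sum>a\<in>A. f a) = (\<Sum>a\<in>A. x \<circ> f a)"
proof -
  interpret Vector_Spaces.linear scale scale x by fact
  show ?thesis by (simp add: fun_eq_iff sum_fun_apply sum)
qed

lemma linear_comp_fscale:
  assumes "Vector_Spaces.linear scale scale x"
  shows "x \<circ> fscale scale c f = fscale scale c (x \<circ> f)"
proof -
  interpret Vector_Spaces.linear scale scale x by fact
  show ?thesis by (simp add: fun_eq_iff fscale_def scale)
qed

lemma End_alg_comp: "x \<in> End_alg scale \<Longrightarrow> y \<in> End_alg scale \<Longrightarrow> x \<circ> y \<in> End_alg scale"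
  unfolding End_alg_iff by (rule Vector_Spaces.linear_compose)

lemma id_in_End_alg: "id \<in> End_alg scale"
  using V.linear_id by (simp add: End_alg_iff)

lemma subspace_End_alg: "F.subspace (End_alg scale)"
proof (rule F.subspaceI)
  show "0 \<in> End_alg scale"
    using P.linear_zero by (simp add: End_alg_iff zero_fun_def)
  show "x + y \<in> End_alg scale" if "x \<in> End_alg scale" "y \<in> End_alg scale" for x y
    using P.linear_compose_add[of x y] that by (simp add: End_alg_iff plus_fun_def)
  show "fscale scale c x \<in> End_alg scale" if "x \<in> End_alg scale" for c x
    using P.linear_compose_scale_right[of x c] that by (simp add: End_alg_iff fscale_def)
qed

lemma linear_eval: "Vector_Spaces.linear (fscale scale) scale (\<lambda>f. f v)"
  by (auto simp: Vector_Spaces.linear_iff fscale_def F.vector_space_axioms V.vector_space_axioms)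

lemma ex_nonzero_if_infinite_dim:
  assumes "\<nexists>S. finite S \<and> V.span S = UNIV"
  obtains v :: 'v where "v \<noteq> 0"
proof -
  have "V.span {} \<noteq> UNIV" using assms by blast
  then show thesis using that by (auto simp: V.span_empty)
qed

lemma ex_End_alg_extend:
  assumes "V.independent Bl"
  shows "\<exists>r\<in>End_alg scale. \<forall>x\<in>Bl. r x = h x"
  using P.linear_independent_extend[OF assms, of h] by (auto simp: End_alg_def)

lemma End_alg_eqI:
  assumes "V.span Bl = UNIV" and "f \<in> End_alg scale" "g \<in> End_alg scale"
    and "\<And>x. x \<in> Bl \<Longrightarrow> f x = g x"
  shows "f = g"
proof
  fix v
  show "f v = g v"
    using assms by (intro P.linear_eq_on[of f g v Bl]) (simp_all add: End_alg_iff)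
qed

lemma ex_sequence_factoring_every_sequence:
  assumes "\<nexists>S. finite S \<and> V.span S = UNIV"
  obtains s :: "nat \<Rightarrow> 'v \<Rightarrow> 'v"
  where "\<And>i. s i \<in> End_alg scale"
    and "\<And>y. (\<And>i. y i \<in> End_alg scale) \<Longrightarrow> \<exists>r\<in>End_alg scale. \<forall>i. r \<circ> s i = y i"
proof -
  obtain Bl where Bl: "V.independent Bl" "V.span Bl = UNIV"
    using V.basis_exists[of UNIV] by (metis top.extremum_uniqueI)
  have "infinite Bl" using assms Bl by blast
  then obtain g where g: "bij_betw g (Bl \<times> (UNIV :: nat set)) Bl"
    by (metis card_of_ordIso card_of_Times_infinite_simps(1) infinite_iff_card_of_nat UNIV_not_empty)
  have "\<forall>i. \<exists>s\<in>End_alg scale. \<forall>x\<in>Bl. s x = g (x, i)"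
    using ex_End_alg_extend[OF Bl(1), of "\<lambda>x. g (x, i)" for i] by blast
  then obtain s where sE: "\<And>i. s i \<in> End_alg scale" and s_basis: "\<And>i x. x \<in> Bl \<Longrightarrow> s i x = g (x, i)"
    by metis
  show thesis
  proof (rule that[OF sE])
    fix y :: "nat \<Rightarrow> 'v \<Rightarrow> 'v" assume yE: "\<And>i. y i \<in> End_alg scale"
    \<comment> \<open>The maps s i send Bl onto the disjoint pieces g ` (Bl \<times> {i}) of Bl, on which r can be
      prescribed independently.\<close>
    define h where "h z = (let p = the_inv_into (Bl \<times> UNIV) g z in y (snd p) (fst p))" for z
    obtain r where rE: "r \<in> End_alg scale" and r_basis: "\<And>z. z \<in> Bl \<Longrightarrow> r z = h z"
      using ex_End_alg_extend[OF Bl(1), of h] by blast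
    have "r \<circ> s i = y i" for i
    proof (rule End_alg_eqI[OF Bl(2) End_alg_comp[OF rE sE] yE])
      fix x assume "x \<in> Bl"
      then have "g (x, i) \<in> Bl" "the_inv_into (Bl \<times> UNIV) g (g (x, i)) = (x, i)"
        using g by (auto simp: bij_betw_def the_inv_into_f_f)
      with \<open>x \<in> Bl\<close> show "(r \<circ> s i) x = y i x"
        by (simp add: s_basis r_basis h_def)
    qed
    with rE show "\<exists>r\<in>End_alg scale. \<forall>i. r \<circ> s i = y i"
      by blast
  qed
qed

lemma additive_on_End_alg_sum:
  fixes \<phi> :: "('v \<Rightarrow> 'v) \<Rightarrow> 'a::cancel_comm_monoid_add"
  assumes add: "\<And>x y. x \<in> End_alg scale \<Longrightarrow> y \<in> End_alg scale \<Longrightarrow> \<phi> (x + y) = \<phi> x + \<phi> y"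
    and f: "\<And>a. a \<in> A \<Longrightarrow> f a \<in> End_alg scale"
  shows "\<phi> (\<Sum>a\<in>A. f a) = (\<Sum>a\<in>A. \<phi> (f a))"
proof -
  have zero: "0 \<in> End_alg scale"
    using F.subspace_0[OF subspace_End_alg] .
  have "\<phi> 0 + \<phi> 0 = \<phi> 0 + 0"
    using add[OF zero zero] by simp
  then have \<phi>_0: "\<phi> (0 :: 'v \<Rightarrow> 'v) = 0"
    by (rule add_left_imp_eq)
  show ?thesis
    using f
  proof (induction A rule: infinite_finite_induct)
    case (insert a A)
    then have "(\<Sum>a\<in>A. f a) \<in> End_alg scale"
      by (intro F.subspace_sum[OF subspace_End_alg]) auto
    then have add_a: "\<phi> (f a + (\<Sum>a\<in>A. f a)) = \<phi> (f a) + \<phi> (\<Sum>a\<in>A. f a)"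
      using insert.prems by (intro add) auto
    have IH: "\<phi> (\<Sum>a\<in>A. f a) = (\<Sum>a\<in>A. \<phi> (f a))"
      using insert.IH insert.prems by blast
    show ?case
      by (simp only: sum.insert[OF insert(1,2)] add_a IH)
  next
    case (infinite A)
    show ?case
      by (simp only: sum.infinite[OF infinite(1)] \<phi>_0)
  qed (simp only: sum.empty \<phi>_0)
qed

definition coord_sum :: "('v \<Rightarrow> 'v) set \<Rightarrow> ('v \<Rightarrow> 'v) \<Rightarrow> 'k" where
  "coord_sum B x = (\<Sum>b\<in>B. F.representation B x b)"

context
  fixes B
  assumes basis: "is_basis_End scale B"
begin

lemma basis_independent: "F.independent B"
  and basis_span: "F.span B = End_alg scale"
  and basis_subset_End_alg: "B \<subseteq> End_alg scale"
  using basis by (auto simp: is_basis_End_def)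

abbreviation coord :: "('v \<Rightarrow> 'v) \<Rightarrow> ('v \<Rightarrow> 'v) \<Rightarrow> 'k" where
  "coord \<equiv> F.representation B"

lemma supp_B_eq: "supp_B scale B x = {b. coord x b \<noteq> 0}"
  using F.representation_ne_zero by (auto simp: supp_B_def)

lemma finite_supp_B: "finite (supp_B scale B x)"
  unfolding supp_B_eq by (rule F.finite_representation)

lemma supp_B_subset: "supp_B scale B x \<subseteq> B"
  by (auto simp: supp_B_def)

lemma sum_supp_B_eq: "x \<in> End_alg scale \<Longrightarrow> (\<Sum>b\<in>supp_B scale B x. fscale scale (coord x b) b) = x"
  unfolding supp_B_eq
  by (rule F.sum_nonzero_representation_eq[OF basis_independent]) (simp add: basis_span)

lemma in_span_supp_B:
  assumes "x \<in> End_alg scale"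
  shows "x \<in> F.span (supp_B scale B x)"
proof -
  have "(\<Sum>b\<in>supp_B scale B x. fscale scale (coord x b) b) \<in> F.span (supp_B scale B x)"
    by (intro F.span_sum F.span_scale) (auto intro: F.span_base)
  then show ?thesis using sum_supp_B_eq[OF assms] by simp
qed

lemma supp_B_subset_if_in_span:
  assumes "z \<in> F.span T" "T \<subseteq> B"
  shows "supp_B scale B z \<subseteq> T"
proof -
  have "coord z = F.representation T z"
    by (rule F.representation_extend[OF basis_independent assms])
  then show ?thesis
    using F.representation_ne_zero[of T z] by (auto simp: supp_B_eq)
qed

lemma comp_in_span_supp_B_products:
  assumes x: "x \<in> End_alg scale" and y: "y \<in> End_alg scale"
  shows "x \<circ> y \<in> F.span (\<Union>b\<in>supp_B scale B x. \<Union>b'\<in>supp_B scale B y. supp_B scale B (b \<circ> b'))"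
    (is "_ \<in> F.span ?T")
proof -
  have linear_b: "Vector_Spaces.linear scale scale b" if "b \<in> supp_B scale B x" for b
    using that supp_B_subset basis_subset_End_alg End_alg_iff by blast
  have "x \<circ> y = (\<Sum>b\<in>supp_B scale B x. fscale scale (coord x b) b)
      \<circ> (\<Sum>b'\<in>supp_B scale B y. fscale scale (coord y b') b')"
    using sum_supp_B_eq[OF x] sum_supp_B_eq[OF y] by simp
  also have "\<dots> = (\<Sum>b\<in>supp_B scale B x. fscale scale (coord x b)
      (\<Sum>b'\<in>supp_B scale B y. fscale scale (coord y b') (b \<circ> b')))"
    by (simp add: sum_comp fscale_comp linear_comp_sum linear_comp_fscale linear_b cong: sum.cong)
  also have "\<dots> \<in> F.span ?T"
  proof (intro F.span_sum F.span_scale)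
    fix b b' assume b: "b \<in> supp_B scale B x" and b': "b' \<in> supp_B scale B y"
    then have "b \<circ> b' \<in> End_alg scale"
      using supp_B_subset basis_subset_End_alg by (intro End_alg_comp) auto
    then have "b \<circ> b' \<in> F.span (supp_B scale B (b \<circ> b'))" by (rule in_span_supp_B)
    also have "\<dots> \<subseteq> F.span ?T"
      using b b' by (intro F.span_mono) blast
    finally show "b \<circ> b' \<in> F.span ?T" .
  qed
  finally show ?thesis .
qed

lemma cs_B_comp_le:
  assumes "k_bounded scale k B" and x: "x \<in> End_alg scale" and y: "y \<in> End_alg scale"
  shows "cs_B scale B (x \<circ> y) \<le> k * cs_B scale B x * cs_B scale B y"
proof -
  let ?Sx = "supp_B scale B x" and ?Sy = "supp_B scale B y"
  let ?T = "\<Union>b\<in>?Sx. \<Union>b'\<in>?Sy. supp_B scale B (b \<circ> b')"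
  have "supp_B scale B (x \<circ> y) \<subseteq> ?T"
    using supp_B_subset by (intro supp_B_subset_if_in_span comp_in_span_supp_B_products x y) blast
  then have "cs_B scale B (x \<circ> y) \<le> card ?T"
    unfolding cs_B_def using finite_supp_B by (intro card_mono) blast+
  also have "\<dots> \<le> (\<Sum>b\<in>?Sx. card (\<Union>b'\<in>?Sy. supp_B scale B (b \<circ> b')))"
    by (rule card_UN_le[OF finite_supp_B])
  also have "\<dots> \<le> (\<Sum>b\<in>?Sx. \<Sum>b'\<in>?Sy. cs_B scale B (b \<circ> b'))"
    unfolding cs_B_def by (intro sum_mono card_UN_le[OF finite_supp_B])
  also have "\<dots> \<le> (\<Sum>b\<in>?Sx. \<Sum>b'\<in>?Sy. k)"
    using assms(1) supp_B_subset unfolding k_bounded_def by (intro sum_mono) blast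
  also have "\<dots> = k * cs_B scale B x * cs_B scale B y"
    by (simp add: cs_B_def)
  finally show ?thesis .
qed

lemma supp_B_sum_subset:
  assumes "J \<subseteq> B" "finite J"
  shows "supp_B scale B (\<Sum>J) = J" and "\<Sum>J \<in> End_alg scale"
proof -
  have J_span: "b \<in> F.span B" if "b \<in> J" for b
    using assms that by (auto intro: F.span_base)
  have "coord (\<Sum>J) c = (\<Sum>b\<in>J. coord b c)" for c
    using F.representation_sum[OF basis_independent, of J id] J_span by simp
  also have "\<dots> c = (if c \<in> J then 1 else 0)" for c
    using assms by (simp add: F.representation_basis[OF basis_independent] subsetD[OF assms(1)] cong: sum.cong)
  finally show "supp_B scale B (\<Sum>J) = J"
    unfolding supp_B_eq by auto
  show "\<Sum>J \<in> End_alg scale"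
    using J_span by (simp add: basis_span[symmetric] F.span_sum)
qed

lemma ex_cs_B_eq:
  assumes "infinite B"
  shows "\<exists>y\<in>End_alg scale. cs_B scale B y = n"
proof -
  obtain J where J: "finite J" "card J = n" "J \<subseteq> B"
    using infinite_arbitrarily_large[OF assms] by blast
  then have "cs_B scale B (\<Sum>J) = n"
    by (simp add: cs_B_def supp_B_sum_subset)
  then show ?thesis
    using J supp_B_sum_subset(2) by blast
qed

lemma infinite_basis_if_infinite_dim:
  assumes inf: "\<nexists>S. finite S \<and> V.span S = UNIV"
  shows "infinite B"
proof
  assume "finite B"
  interpret FP: vector_space_pair "fscale scale" scale ..
  obtain v0 :: 'v where v0: "v0 \<noteq> 0"
    using ex_nonzero_if_infinite_dim[OF inf] .
  \<comment> \<open>Evaluation at v0 maps R onto L, so L would be spanned by the finitely many b v0.\<close>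
  have "V.span ((\<lambda>f. f v0) ` B) = UNIV"
  proof safe
    fix w :: 'v
    obtain r where "r \<in> End_alg scale" "r v0 = w"
      using ex_End_alg_extend[of "{v0}" "\<lambda>_. w"] v0 by auto
    then show "w \<in> V.span ((\<lambda>f. f v0) ` B)"
      using FP.linear_span_image[OF linear_eval[of v0], of B] basis_span by auto
  qed simp
  moreover have "finite ((\<lambda>f. f v0) ` B)"
    using \<open>finite B\<close> by blast
  ultimately show False
    using inf by meson
qed

lemma not_k_bounded_if_infinite_dim:
  assumes inf: "\<nexists>S. finite S \<and> V.span S = UNIV"
  shows "\<not> k_bounded scale k B"
proof
  assume kb: "k_bounded scale k B"
  obtain s :: "nat \<Rightarrow> 'v \<Rightarrow> 'v" where sE: "\<And>i. s i \<in> End_alg scale"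
    and factor: "\<And>y. (\<And>i. y i \<in> End_alg scale) \<Longrightarrow> \<exists>r\<in>End_alg scale. \<forall>i. r \<circ> s i = y i"
    using ex_sequence_factoring_every_sequence[OF inf] by blast
  have "\<forall>i. \<exists>y\<in>End_alg scale. cs_B scale B y = k * cs_B scale B (s i) * i + 1"
    using ex_cs_B_eq[OF infinite_basis_if_infinite_dim[OF inf]] by blast
  then obtain y :: "nat \<Rightarrow> 'v \<Rightarrow> 'v" where yE: "\<And>i. y i \<in> End_alg scale"
    and cs_y: "\<And>i. cs_B scale B (y i) = k * cs_B scale B (s i) * i + 1"
    by metis
  obtain r where rE: "r \<in> End_alg scale" and rs: "\<And>i. r \<circ> s i = y i"
    using factor[of y] yE by blast
  let ?m = "cs_B scale B r"
  have "cs_B scale B (y ?m) \<le> k * ?m * cs_B scale B (s ?m)"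
    using cs_B_comp_le[OF kb rE sE] rs by metis
  then show False
    using cs_y[of ?m] by (simp add: mult.commute mult.left_commute)
qed

lemma coord_sum_lincomb:
  assumes "\<And>a. a \<in> A \<Longrightarrow> z a \<in> End_alg scale"
  shows "coord_sum B (\<Sum>a\<in>A. fscale scale (c a) (z a)) = (\<Sum>a\<in>A. c a * coord_sum B (z a))"
proof -
  have z_span: "\<And>a. a \<in> A \<Longrightarrow> z a \<in> F.span B"
    using assms basis_span by simp
  have "coord (\<Sum>a\<in>A. fscale scale (c a) (z a)) = (\<lambda>b. \<Sum>a\<in>A. coord (fscale scale (c a) (z a)) b)"
    using z_span by (intro F.representation_sum[OF basis_independent]) (auto intro: F.span_scale)
  also have "\<dots> = (\<lambda>b. \<Sum>a\<in>A. c a * coord (z a) b)"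
    using z_span by (simp add: F.representation_scale[OF basis_independent])
  finally have "coord_sum B (\<Sum>a\<in>A. fscale scale (c a) (z a)) = (\<Sum>b\<in>B. \<Sum>a\<in>A. c a * coord (z a) b)"
    by (simp add: coord_sum_def)
  also have "\<dots> = (\<Sum>a\<in>A. \<Sum>b\<in>B. c a * coord (z a) b)"
    by (rule sum.swap)
  finally show ?thesis
    by (simp add: coord_sum_def sum_distrib_left)
qed

lemma coord_sum_add:
  assumes "x \<in> End_alg scale" "y \<in> End_alg scale"
  shows "coord_sum B (x + y) = coord_sum B x + coord_sum B y"
  using assms by (simp add: coord_sum_def F.representation_add[OF basis_independent] basis_span sum.distrib)

lemma coord_sum_basis: "finite B \<Longrightarrow> b \<in> B \<Longrightarrow> coord_sum B b = 1"
  by (simp add: coord_sum_def F.representation_basis[OF basis_independent])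

lemma coord_sum_comp:
  assumes "finite B" and sm: "strong_multiplicative B"
    and x: "x \<in> End_alg scale" and y: "y \<in> End_alg scale"
  shows "coord_sum B (x \<circ> y) = coord_sum B x * coord_sum B y"
proof -
  have expand: "z = (\<Sum>b\<in>B. fscale scale (coord z b) b)" if "z \<in> End_alg scale" for z
    using that basis_span \<open>finite B\<close>
    by (intro F.sum_representation_eq[OF basis_independent, symmetric]) auto
  have left: "coord_sum B (b \<circ> y) = coord_sum B y" if b: "b \<in> B" for b
  proof -
    have "Vector_Spaces.linear scale scale b"
      using b basis_subset_End_alg End_alg_iff by blast
    then have b_y: "b \<circ> y = (\<Sum>b'\<in>B. fscale scale (coord y b') (b \<circ> b'))"
      by (subst expand[OF y]) (simp add: linear_comp_sum linear_comp_fscale)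
    have b_b': "b \<circ> b' \<in> B" if "b' \<in> B" for b'
      using sm b that by (simp add: strong_multiplicative_def)
    have "coord_sum B (b \<circ> y) = (\<Sum>b'\<in>B. coord y b' * coord_sum B (b \<circ> b'))"
      unfolding b_y by (rule coord_sum_lincomb) (use b_b' basis_subset_End_alg in blast)
    also have "\<dots> = (\<Sum>b'\<in>B. coord y b')"
      using b_b' \<open>finite B\<close> by (simp add: coord_sum_basis)
    finally show ?thesis
      by (simp add: coord_sum_def)
  qed
  have x_y: "x \<circ> y = (\<Sum>b\<in>B. fscale scale (coord x b) (b \<circ> y))"
    by (subst expand[OF x]) (simp add: sum_comp fscale_comp)
  have "coord_sum B (x \<circ> y) = (\<Sum>b\<in>B. coord x b * coord_sum B (b \<circ> y))"
    unfolding x_y by (rule coord_sum_lincomb) (use y basis_subset_End_alg End_alg_comp in blast)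
  also have "\<dots> = (\<Sum>b\<in>B. coord x b * coord_sum B y)"
    by (rule sum.cong) (simp_all add: left)
  also have "\<dots> = coord_sum B x * coord_sum B y"
    by (simp add: coord_sum_def sum_distrib_right)
  finally show ?thesis .
qed

end

definition matrix_unit :: "'v set \<Rightarrow> 'v \<Rightarrow> 'v \<Rightarrow> 'v \<Rightarrow> 'v" where
  "matrix_unit Bl i j = (\<lambda>x. scale (V.representation Bl x j) i)"

definition matrix_units :: "'v set \<Rightarrow> ('v \<Rightarrow> 'v) set" where
  "matrix_units Bl = (\<lambda>(i, j). matrix_unit Bl i j) ` (Bl \<times> Bl)"

context
  fixes Bl
  assumes Bl_independent: "V.independent Bl" and Bl_span: "V.span Bl = UNIV"
    and Bl_finite: "finite Bl"
begin

lemma matrix_unit_linear: "Vector_Spaces.linear scale scale (matrix_unit Bl i j)"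
  by (auto simp: Vector_Spaces.linear_iff matrix_unit_def V.representation_add[OF Bl_independent]
      V.representation_scale[OF Bl_independent] Bl_span V.vector_space_axioms V.scale_left_distrib)

lemma matrix_unit_in_End_alg: "matrix_unit Bl i j \<in> End_alg scale"
  using matrix_unit_linear by (simp add: End_alg_iff)

lemma matrix_unit_apply: "l \<in> Bl \<Longrightarrow> matrix_unit Bl i j l = (if l = j then i else 0)"
  by (auto simp: matrix_unit_def V.representation_basis[OF Bl_independent])

lemma matrix_unit_comp:
  "k \<in> Bl \<Longrightarrow> matrix_unit Bl i j \<circ> matrix_unit Bl k l = (if j = k then matrix_unit Bl i l else 0)"
  by (auto simp: fun_eq_iff matrix_unit_def V.representation_scale[OF Bl_independent] Bl_span
      V.representation_basis[OF Bl_independent])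

lemma sum_representation_Bl: "(\<Sum>i\<in>Bl. scale (V.representation Bl x i) i) = x"
  by (rule V.sum_representation_eq[OF Bl_independent]) (auto simp: Bl_span Bl_finite)

lemma id_eq_sum_matrix_units: "id = (\<Sum>i\<in>Bl. matrix_unit Bl i i)"
  by (simp add: fun_eq_iff sum_fun_apply matrix_unit_def sum_representation_Bl)

lemma inj_on_matrix_unit: "inj_on (\<lambda>(i, j). matrix_unit Bl i j) (Bl \<times> Bl)"
proof (rule inj_onI, clarify)
  fix i j i' j'
  assume ij: "i \<in> Bl" "j \<in> Bl" "i' \<in> Bl" "j' \<in> Bl" and eq: "matrix_unit Bl i j = matrix_unit Bl i' j'"
  have "i = (if j = j' then i' else 0)"
    using fun_cong[OF eq, of j] ij by (simp add: matrix_unit_apply)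
  moreover have "i \<noteq> 0"
    using V.dependent_zero Bl_independent ij(1) by blast
  ultimately show "i = i' \<and> j = j'" by (auto split: if_splits)
qed

lemma finite_matrix_units: "finite (matrix_units Bl)"
  unfolding matrix_units_def using Bl_finite by simp

lemma matrix_units_subset_End_alg: "matrix_units Bl \<subseteq> End_alg scale"
  unfolding matrix_units_def using matrix_unit_in_End_alg by auto

lemma multiplicative_matrix_units: "multiplicative (matrix_units Bl)"
  unfolding multiplicative_def matrix_units_def by (auto simp: matrix_unit_comp)

lemma linear_eq_sum_matrix_units:
  assumes "Vector_Spaces.linear scale scale f"
  shows "f = (\<Sum>j\<in>Bl. \<Sum>i\<in>Bl. fscale scale (V.representation Bl (f j) i) (matrix_unit Bl i j))"
proof
  interpret Vector_Spaces.linear scale scale f by fact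
  fix x
  have "f x = f (\<Sum>j\<in>Bl. scale (V.representation Bl x j) j)"
    by (simp add: sum_representation_Bl)
  also have "\<dots> = (\<Sum>j\<in>Bl. scale (V.representation Bl x j) (f j))"
    by (simp add: sum scale)
  also have "\<dots> = (\<Sum>j\<in>Bl. scale (V.representation Bl x j)
      (\<Sum>i\<in>Bl. scale (V.representation Bl (f j) i) i))"
    by (simp add: sum_representation_Bl)
  also have "\<dots> = (\<Sum>j\<in>Bl. \<Sum>i\<in>Bl. fscale scale (V.representation Bl (f j) i) (matrix_unit Bl i j)) x"
    by (simp add: V.scale_sum_right mult.commute sum_fun_apply fscale_def matrix_unit_def)
  finally show "f x = (\<Sum>j\<in>Bl. \<Sum>i\<in>Bl. fscale scale (V.representation Bl (f j) i) (matrix_unit Bl i j)) x" .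
qed

lemma span_matrix_units: "F.span (matrix_units Bl) = End_alg scale"
proof
  show "F.span (matrix_units Bl) \<subseteq> End_alg scale"
    by (rule F.span_minimal[OF matrix_units_subset_End_alg subspace_End_alg])
  show "End_alg scale \<subseteq> F.span (matrix_units Bl)"
  proof
    fix f assume "f \<in> End_alg scale"
    then have f: "f = (\<Sum>j\<in>Bl. \<Sum>i\<in>Bl. fscale scale (V.representation Bl (f j) i) (matrix_unit Bl i j))"
      by (simp add: End_alg_iff linear_eq_sum_matrix_units)
    have "(\<Sum>j\<in>Bl. \<Sum>i\<in>Bl. fscale scale (V.representation Bl (f j) i) (matrix_unit Bl i j))
        \<in> F.span (matrix_units Bl)"
      by (intro F.span_sum F.span_scale) (auto intro!: F.span_base simp: matrix_units_def)
    then show "f \<in> F.span (matrix_units Bl)" using f by simp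
  qed
qed

lemma independent_matrix_units: "F.independent (matrix_units Bl)"
proof (rule F.independent_if_scalars_zero[OF finite_matrix_units])
  fix c m
  assume sum0: "(\<Sum>m\<in>matrix_units Bl. fscale scale (c m) m) = 0" and m: "m \<in> matrix_units Bl"
  from m obtain i l where il: "i \<in> Bl" "l \<in> Bl" "m = matrix_unit Bl i l"
    unfolding matrix_units_def by auto
  have "(\<Sum>p\<in>Bl \<times> Bl. fscale scale (c (matrix_unit Bl (fst p) (snd p))) (matrix_unit Bl (fst p) (snd p))) = 0"
    using sum0 unfolding matrix_units_def
    by (subst (asm) sum.reindex[OF inj_on_matrix_unit]) (simp add: case_prod_beta)
  then have "(\<Sum>i\<in>Bl. \<Sum>j\<in>Bl. fscale scale (c (matrix_unit Bl i j)) (matrix_unit Bl i j)) = 0"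
    by (simp add: sum.cartesian_product case_prod_beta)
  \<comment> \<open>Evaluating at the basis vector l leaves \<Sum>i\<in>Bl. c(e_il) i = 0.\<close>
  then have "(\<Sum>i\<in>Bl. \<Sum>j\<in>Bl. fscale scale (c (matrix_unit Bl i j)) (matrix_unit Bl i j)) l = 0"
    by simp
  then have "(\<Sum>i\<in>Bl. \<Sum>j\<in>Bl. if l = j then scale (c (matrix_unit Bl i j)) i else 0) = 0"
    using il
    by (simp add: sum_fun_apply fscale_def matrix_unit_apply if_distrib[of "scale _"] cong: if_cong)
  then have "(\<Sum>i\<in>Bl. scale (c (matrix_unit Bl i l)) i) = 0"
    using il Bl_finite by (simp add: sum.delta)
  then have "\<forall>i\<in>Bl. c (matrix_unit Bl i l) = 0"
    using Bl_independent Bl_finite by (auto simp: V.dependent_finite)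
  then show "c m = 0" using il by simp
qed

lemma is_basis_End_matrix_units: "is_basis_End scale (matrix_units Bl)"
  unfolding is_basis_End_def
  using matrix_units_subset_End_alg independent_matrix_units span_matrix_units by simp

lemma additive_multiplicative_functional_eq_0:
  fixes \<phi> :: "('v \<Rightarrow> 'v) \<Rightarrow> 'k"
  assumes two: "2 \<le> card Bl"
    and add: "\<And>x y. x \<in> End_alg scale \<Longrightarrow> y \<in> End_alg scale \<Longrightarrow> \<phi> (x + y) = \<phi> x + \<phi> y"
    and mult: "\<And>x y. x \<in> End_alg scale \<Longrightarrow> y \<in> End_alg scale \<Longrightarrow> \<phi> (x \<circ> y) = \<phi> x * \<phi> y"
    and x: "x \<in> End_alg scale"
  shows "\<phi> x = 0"
proof -
  have \<phi>_0: "\<phi> 0 = 0"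
    using additive_on_End_alg_sum[of \<phi> "{}"] add by simp
  have \<phi>_diag: "\<phi> (matrix_unit Bl i i) = 0" if i: "i \<in> Bl" for i
  proof -
    obtain j where j: "j \<in> Bl" "j \<noteq> i"
      using two i by (metis Bl_finite card_le_Suc0_iff_eq not_less_eq_eq numeral_2_eq_2)
    have "\<phi> (matrix_unit Bl i j) * \<phi> (matrix_unit Bl i j) = 0"
      using mult[OF matrix_unit_in_End_alg matrix_unit_in_End_alg, of i j i j] i j \<phi>_0
      by (simp add: matrix_unit_comp)
    then have "\<phi> (matrix_unit Bl i j) = 0" by simp
    then show ?thesis
      using mult[OF matrix_unit_in_End_alg matrix_unit_in_End_alg, of i j j i] i j
      by (simp add: matrix_unit_comp)
  qed
  have "\<phi> id = (\<Sum>i\<in>Bl. \<phi> (matrix_unit Bl i i))"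
    unfolding id_eq_sum_matrix_units using add matrix_unit_in_End_alg by (rule additive_on_End_alg_sum)
  then have "\<phi> id = 0"
    using \<phi>_diag by simp
  then show ?thesis
    using mult[OF x id_in_End_alg] by simp
qed

lemma not_strong_multiplicative_if_dim_ge_2:
  assumes two: "2 \<le> card Bl" and basis: "is_basis_End scale B"
  shows "\<not> strong_multiplicative B"
proof
  assume sm: "strong_multiplicative B"
  have "finite B"
    using F.independent_span_bound[OF finite_matrix_units basis_independent[OF basis]]
      basis_subset_End_alg[OF basis] span_matrix_units by auto
  have coord_sum_0: "coord_sum B x = 0" if "x \<in> End_alg scale" for x
    using two coord_sum_add[OF basis] coord_sum_comp[OF basis \<open>finite B\<close> sm] that
    by (rule additive_multiplicative_functional_eq_0)
  obtain i where "i \<in> Bl"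
    using two by fastforce
  then have "id i \<noteq> (0 :: 'v \<Rightarrow> 'v) i"
    using V.dependent_zero Bl_independent by auto
  then have "id \<noteq> (0 :: 'v \<Rightarrow> 'v)" by metis
  then have "B \<noteq> {}"
    using id_in_End_alg basis_span[OF basis] by (auto simp: F.span_empty)
  then obtain b where "b \<in> B" by blast
  then show False
    using coord_sum_0 coord_sum_basis[OF basis \<open>finite B\<close>] basis_subset_End_alg[OF basis] by force
qed

end

lemma finite_basis_if_finite_dim:
  assumes "finite S" "V.span S = UNIV" and uw: "u \<noteq> w" "V.independent {u, w}"
  obtains Bl where "V.independent Bl" "V.span Bl = UNIV" "finite Bl" "2 \<le> card Bl"
proof -
  obtain Bl where Bl: "V.independent Bl" "V.span Bl = UNIV"
    using V.basis_exists[of UNIV] by (metis top.extremum_uniqueI)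
  have "finite Bl"
    using V.independent_span_bound[OF assms(1) Bl(1)] assms(2) by auto
  moreover have "card {u, w} \<le> card Bl"
    using V.independent_span_bound[OF \<open>finite Bl\<close> uw(2)] Bl(2) by auto
  ultimately show thesis
    using that Bl uw(1) by simp
qed

end

theorem theorem5p7:
  fixes scale :: "'k::field \<Rightarrow> 'v::ab_group_add \<Rightarrow> 'v"
  assumes vs: "vector_space scale"
    and dim_gt_1: "\<exists>u w. u \<noteq> w \<and> \<not> module.dependent scale {u, w}"
  shows "((\<exists>S. finite S \<and> module.span scale S = UNIV) \<longrightarrow>
            (\<exists>B. is_basis_End scale B \<and> multiplicative B) \<and>
            \<not> (\<exists>B. is_basis_End scale B \<and> strong_multiplicative B))
       \<and> (\<not> (\<exists>S. finite S \<and> module.span scale S = UNIV) \<longrightarrow>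
            \<not> (\<exists>B. is_basis_End scale B \<and> bounded_basis scale B))"
proof -
  interpret E: endomorphism_algebra scale
    using vs by (rule endomorphism_algebra.intro)
  show ?thesis
  proof (intro conjI impI)
    assume "\<exists>S. finite S \<and> module.span scale S = UNIV"
    then obtain Bl where Bl: "E.V.independent Bl" "E.V.span Bl = UNIV" "finite Bl" "2 \<le> card Bl"
      using dim_gt_1 E.finite_basis_if_finite_dim by metis
    show "\<exists>B. is_basis_End scale B \<and> multiplicative B"
      using E.is_basis_End_matrix_units[OF Bl(1-3)] E.multiplicative_matrix_units[OF Bl(1-3)] by blast
    show "\<not> (\<exists>B. is_basis_End scale B \<and> strong_multiplicative B)"
      using E.not_strong_multiplicative_if_dim_ge_2[OF Bl] by blast
  next
    assume "\<not> (\<exists>S. finite S \<and> module.span scale S = UNIV)"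
    then show "\<not> (\<exists>B. is_basis_End scale B \<and> bounded_basis scale B)"
      using E.not_k_bounded_if_infinite_dim by (auto simp: bounded_basis_def)
  qed
qed

end
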